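(* Let $\mathcal{H}$ be a Hilbert space of finite dimension $d\ge2$, let $\mathcal{F}(\mathcal{H})\subseteq\mathcal{D}(\mathcal{H})$ be a closed set of free states (not assumed convex), and let $\rho\in\mathcal{D}(\mathcal{H})\setminus\mathcal{F}(\mathcal{H})$. Then there exists a family of channel ensembles $\big(\{p_i,\Lambda_i^{(m)}\}_i\big)_{m=2}^d$ such that \[\max_{\sigma\in\mathcal{F}(\mathcal{H})}\ \min_{m=2,\dots,d}\ \frac{\min_{\{M_i\}_i}p_{\mathrm{err}}(\{p_i,\Lambda_i^{(m)}\}_i,\{M_i\}_i,\rho^{\otimes m})}{\min_{\{M_i\}_i}p_{\mathrm{err}}(\{p_i,\Lambda_i^{(m)}\}_i,\{M_i\}_i,\sigma^{\otimes m})}<1.\]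
   Context: $\mathcal{D}(\mathcal{H})$ is the set of density operators on $\mathcal{H}$. A channel ensemble $\{p_i,\Lambda_i^{(m)}\}_i$ is a finite probability distribution $(p_i)_i$ with quantum channels $\Lambda_i^{(m)}$ from operators on $\mathcal{H}^{\otimes m}$ to operators on a common finite-dimensional output space. For a POVM $\{M_i\}_i$ on the output space (same index set) and a state $\omega$ on $\mathcal{H}^{\otimes m}$, the error probability of channel exclusion is $p_{\mathrm{err}}(\{p_i,\Lambda_i^{(m)}\}_i,\{M_i\}_i,\omega)=\sum_ip_i\operatorname{tr}[M_i\Lambda_i^{(m)}(\omega)]$; the minima are over all such POVMs. *)

theory Defs
  imports "HOL-Analysis.Analysis"
begin

text \<open>Operators on a finite-dimensional Hilbert space with orthonormal basis indexed by
  a finite set B are represented as matrices B x B, i.e. functions b => b => complex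
  that vanish outside B x B.\<close>

definition op_on :: "'b set \<Rightarrow> ('b \<Rightarrow> 'b \<Rightarrow> complex) \<Rightarrow> bool" where
  "op_on B X \<longleftrightarrow> (\<forall>i j. (i \<notin> B \<or> j \<notin> B) \<longrightarrow> X i j = 0)"

definition psd :: "'b set \<Rightarrow> ('b \<Rightarrow> 'b \<Rightarrow> complex) \<Rightarrow> bool" where
  "psd B X \<longleftrightarrow> op_on B X \<and> (\<forall>i\<in>B. \<forall>j\<in>B. X j i = cnj (X i j)) \<and>
     (\<forall>v :: 'b \<Rightarrow> complex.
        Im (\<Sum>i\<in>B. \<Sum>j\<in>B. cnj (v i) * X i j * v j) = 0 \<and>
        Re (\<Sum>i\<in>B. \<Sum>j\<in>B. cnj (v i) * X i j * v j) \<ge> 0)"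

definition tr :: "'b set \<Rightarrow> ('b \<Rightarrow> 'b \<Rightarrow> complex) \<Rightarrow> complex" where
  "tr B X = (\<Sum>i\<in>B. X i i)"

definition density :: "'b set \<Rightarrow> ('b \<Rightarrow> 'b \<Rightarrow> complex) \<Rightarrow> bool" where
  "density B X \<longleftrightarrow> psd B X \<and> tr B X = 1"

text \<open>Quantum channel (CPTP linear map) from operators on the space with basis B to
  operators on the output space C^n (basis {..<n}). Complete positivity: id_k (x) Lambda
  is positive for every k.\<close>
definition channel :: "'b set \<Rightarrow> nat \<Rightarrow> (('b \<Rightarrow> 'b \<Rightarrow> complex) \<Rightarrow> (nat \<Rightarrow> nat \<Rightarrow> complex)) \<Rightarrow> bool" where
  "channel B n \<Lambda> \<longleftrightarrow>
     (\<forall>X Y c. op_on B X \<longrightarrow> op_on B Y \<longrightarrow>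
        \<Lambda> (\<lambda>i j. c * X i j + Y i j) = (\<lambda>i j. c * \<Lambda> X i j + \<Lambda> Y i j)) \<and>
     (\<forall>X. op_on B X \<longrightarrow> op_on {..<n} (\<Lambda> X)) \<and>
     (\<forall>X. op_on B X \<longrightarrow> tr {..<n} (\<Lambda> X) = tr B X) \<and>
     (\<forall>k::nat. \<forall>X. psd ({..<k} \<times> B) X \<longrightarrow>
        psd ({..<k} \<times> {..<n})
          (\<lambda>u w. \<Lambda> (\<lambda>x y. X (fst u, x) (fst w, y)) (snd u) (snd w)))"

definition ensemble :: "'b set \<Rightarrow> nat \<Rightarrow> nat \<Rightarrow> (nat \<Rightarrow> real) \<Rightarrow>
    (nat \<Rightarrow> ('b \<Rightarrow> 'b \<Rightarrow> complex) \<Rightarrow> (nat \<Rightarrow> nat \<Rightarrow> complex)) \<Rightarrow> bool" where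
  "ensemble B n N p \<Lambda> \<longleftrightarrow> (\<forall>i<N. p i \<ge> 0) \<and> (\<Sum>i<N. p i) = 1 \<and> (\<forall>i<N. channel B n (\<Lambda> i))"

definition povm :: "nat \<Rightarrow> nat \<Rightarrow> (nat \<Rightarrow> nat \<Rightarrow> nat \<Rightarrow> complex) \<Rightarrow> bool" where
  "povm n N M \<longleftrightarrow> (\<forall>i<N. psd {..<n} (M i)) \<and>
     (\<forall>a b. (\<Sum>i<N. M i a b) = (if a = b \<and> a < n then 1 else 0))"

definition perr :: "nat \<Rightarrow> nat \<Rightarrow> (nat \<Rightarrow> real) \<Rightarrow>
    (nat \<Rightarrow> ('b \<Rightarrow> 'b \<Rightarrow> complex) \<Rightarrow> (nat \<Rightarrow> nat \<Rightarrow> complex)) \<Rightarrow>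
    (nat \<Rightarrow> nat \<Rightarrow> nat \<Rightarrow> complex) \<Rightarrow> ('b \<Rightarrow> 'b \<Rightarrow> complex) \<Rightarrow> real" where
  "perr n N p \<Lambda> M \<omega> = (\<Sum>i<N. p i * Re (\<Sum>a<n. \<Sum>b<n. M i a b * \<Lambda> i \<omega> b a))"

text \<open>Minimal error probability over all POVMs (the minimum is attained; Inf = min).\<close>
definition minerr :: "nat \<Rightarrow> nat \<Rightarrow> (nat \<Rightarrow> real) \<Rightarrow>
    (nat \<Rightarrow> ('b \<Rightarrow> 'b \<Rightarrow> complex) \<Rightarrow> (nat \<Rightarrow> nat \<Rightarrow> complex)) \<Rightarrow>
    ('b \<Rightarrow> 'b \<Rightarrow> complex) \<Rightarrow> real" where
  "minerr n N p \<Lambda> \<omega> = Inf {perr n N p \<Lambda> M \<omega> | M. povm n N M}"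

text \<open>Matrix of an operator on H = C^'n, and its m-fold tensor power on H^(x)m,
  whose basis is the set of index words of length m.\<close>
definition mfun :: "complex^'n^'n \<Rightarrow> ('n \<Rightarrow> 'n \<Rightarrow> complex)" where
  "mfun A = (\<lambda>i j. A $ i $ j)"

definition words :: "nat \<Rightarrow> 'n list set" where
  "words m = {xs. length xs = m}"

definition tpow :: "nat \<Rightarrow> ('n \<Rightarrow> 'n \<Rightarrow> complex) \<Rightarrow> ('n list \<Rightarrow> 'n list \<Rightarrow> complex)" where
  "tpow m X = (\<lambda>xs ys. if length xs = m \<and> length ys = m
                        then (\<Prod>k<m. X (xs ! k) (ys ! k)) else 0)"

end

theory Submission
  imports Defs
begin

text \<open>
  Work with two copies. By the swap trick, \<open>W = SWAP - (\<rho> \<otimes> I + I \<otimes> \<rho>)\<close> satisfies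
  \<open>tr (W (\<sigma> \<otimes> \<sigma>)) = \<parallel>\<sigma> - \<rho>\<parallel>\<^sub>2\<^sup>2 - \<parallel>\<rho>\<parallel>\<^sub>2\<^sup>2\<close>. For large \<open>k\<close> the matrices
  \<open>A = (k I + W) / (2 k)\<close> and \<open>I - A\<close> are Hermitian and diagonally dominant, hence positive, so
  "measure \<open>{A, I - A}\<close>, then prepare \<open>|0\<rangle>\<close> or \<open>|1\<rangle>\<close>" is a channel. Excluding it, with equal
  priors, against the channel that always prepares \<open>|0\<rangle>\<close> has optimal error \<open>tr (A \<omega>) / 2\<close>,
  which on \<open>\<omega> = \<sigma> \<otimes> \<sigma>\<close> is \<open>(C + \<parallel>\<sigma> - \<rho>\<parallel>\<^sub>2\<^sup>2) / (4 k)\<close> with \<open>C = k - \<parallel>\<rho>\<parallel>\<^sub>2\<^sup>2 > 0\<close>.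
  Since \<open>F\<close> is closed and \<open>\<rho> \<notin> F\<close>, \<open>\<parallel>\<sigma> - \<rho>\<parallel> \<ge> e > 0\<close> on \<open>F\<close>, so at \<open>m = 2\<close> the ratio of
  the two errors is at most \<open>C / (C + e\<^sup>2) < 1\<close> uniformly in \<open>\<sigma> \<in> F\<close>.
\<close>

section \<open>Hermitian and positive semidefinite matrices\<close>

definition id_mat :: "'b \<Rightarrow> 'b \<Rightarrow> complex" where
  "id_mat x y = (if x = y then 1 else 0)"

lemma id_mat_mult [simp]:
  "id_mat x y * z = (if x = y then z else 0)"
  "z * id_mat x y = (if x = y then z else 0)"
  by (simp_all add: id_mat_def)

lemma cnj_id_mat [simp]: "cnj (id_mat x y) = id_mat x y"
  by (simp add: id_mat_def)

lemma id_mat_commute: "id_mat y x = id_mat x y"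
  by (simp add: id_mat_def)

lemma if_zero_mult:
  "(if P then a else 0) * (z :: complex) = (if P then a * z else 0)"
  "z * (if P then a else 0) = (if P then z * a else 0)"
  by simp_all

lemma sum_if_zero: "(\<Sum>x\<in>A. if P then f x else 0) = (if P then \<Sum>x\<in>A. f x else 0)"
  by simp

definition hermitian_on :: "'b set \<Rightarrow> ('b \<Rightarrow> 'b \<Rightarrow> complex) \<Rightarrow> bool" where
  "hermitian_on B A \<longleftrightarrow> (\<forall>x\<in>B. \<forall>y\<in>B. A y x = cnj (A x y))"

definition quad_form :: "'b set \<Rightarrow> ('b \<Rightarrow> 'b \<Rightarrow> complex) \<Rightarrow> ('b \<Rightarrow> complex) \<Rightarrow> complex" where
  "quad_form B X v = (\<Sum>i\<in>B. \<Sum>j\<in>B. cnj (v i) * X i j * v j)"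

definition nonneg_form_on :: "'b set \<Rightarrow> ('b \<Rightarrow> 'b \<Rightarrow> complex) \<Rightarrow> bool" where
  "nonneg_form_on B X \<longleftrightarrow> (\<forall>v. Im (quad_form B X v) = 0 \<and> 0 \<le> Re (quad_form B X v))"

lemma psd_iff: "psd B X \<longleftrightarrow> op_on B X \<and> hermitian_on B X \<and> nonneg_form_on B X"
  unfolding psd_def hermitian_on_def nonneg_form_on_def quad_form_def by blast

lemma hermitian_onD: "hermitian_on B A \<Longrightarrow> x \<in> B \<Longrightarrow> y \<in> B \<Longrightarrow> A y x = cnj (A x y)"
  unfolding hermitian_on_def by blast

text \<open>Unlike \<open>hermitian_onD\<close>, which loops when given to the simplifier, this orientation is a safe
  rewrite rule.\<close>

lemma hermitian_on_cnj: "hermitian_on B A \<Longrightarrow> x \<in> B \<Longrightarrow> y \<in> B \<Longrightarrow> cnj (A x y) = A y x"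
  using hermitian_onD[of B A x y] by simp

lemma nonneg_form_onD:
  "nonneg_form_on B X \<Longrightarrow> Im (quad_form B X v) = 0 \<and> 0 \<le> Re (quad_form B X v)"
  unfolding nonneg_form_on_def by blast

lemma hermitian_diag_real: "hermitian_on B A \<Longrightarrow> x \<in> B \<Longrightarrow> Im (A x x) = 0"
  using hermitian_onD[of B A x x] by (simp add: complex_eq_iff)

lemma nonneg_form_diag:
  assumes "finite B" "nonneg_form_on B G" "x \<in> B"
  shows "Im (G x x) = 0 \<and> 0 \<le> Re (G x x)"
proof -
  have "quad_form B G (id_mat x) = G x x"
    using assms(1,3) by (simp add: quad_form_def if_zero_mult cong: if_cong)
  then show ?thesis
    using nonneg_form_onD[OF assms(2)] by metis
qed

lemma quad_form_two_point:
  assumes "finite B" "x \<in> B" "y \<in> B" "x \<noteq> y"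
  shows "quad_form B G (\<lambda>p. if p = x then a else if p = y then b else 0) =
    cnj a * G x x * a + cnj a * G x y * b + cnj b * G y x * a + cnj b * G y y * b"
proof -
  let ?v = "\<lambda>p. if p = x then a else if p = y then b else 0"
  have "quad_form B G ?v = quad_form {x, y} G ?v"
    unfolding quad_form_def using assms(1-3)
    by (intro sum.mono_neutral_cong_right sum.mono_neutral_right) auto
  then show ?thesis
    using assms(4) by (simp add: quad_form_def)
qed

text \<open>Evaluate the form at \<open>e\<^sub>x + t e\<^sub>y\<close>, with the phase \<open>t\<close> chosen so that \<open>t G x y = -|G x y|\<close>.\<close>

lemma nonneg_form_offdiag_le:
  assumes "finite B" "hermitian_on B G" "nonneg_form_on B G" "x \<in> B" "y \<in> B"
  shows "cmod (G x y) \<le> (Re (G x x) + Re (G y y)) / 2"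
proof (cases "x = y \<or> G x y = 0")
  case True
  then show ?thesis
    using nonneg_form_diag[OF assms(1,3,4)] nonneg_form_diag[OF assms(1,3,5)] by (auto simp: cmod_eq_Re)
next
  case False
  define z where "z = G x y"
  define t where "t = - cnj z / of_real (cmod z)"
  have z: "z \<noteq> 0" and "x \<noteq> y"
    using False by (auto simp: z_def)
  have tz: "t * z = - of_real (cmod z)" and tt: "cnj t * t = 1"
    using z by (simp_all add: t_def field_simps complex_norm_square[symmetric] power2_eq_square)
  have "quad_form B G (\<lambda>p. if p = x then 1 else if p = y then t else 0)
      = G x x + t * z + cnj (t * z) + cnj t * t * G y y"
    using hermitian_onD[OF assms(2,4,5)]
    by (simp add: quad_form_two_point[OF assms(1,4,5) \<open>x \<noteq> y\<close>] z_def[symmetric] mult.commute)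
  also have "\<dots> = G x x + G y y - 2 * of_real (cmod z)"
    unfolding tz tt by simp
  finally have "quad_form B G (\<lambda>p. if p = x then 1 else if p = y then t else 0)
      = G x x + G y y - 2 * of_real (cmod z)" .
  moreover have "0 \<le> Re (quad_form B G (\<lambda>p. if p = x then 1 else if p = y then t else 0))"
    using nonneg_form_onD[OF assms(3)] by blast
  ultimately show ?thesis
    by (simp add: z_def)
qed

section \<open>Pairing positive with diagonally dominant matrices\<close>

text \<open>Counting the diagonal entry in the row sum, this is the usual
  \<open>(\<Sum>y \<noteq> x. |A x y|) \<le> A x x\<close> for Hermitian \<open>A\<close>.\<close>

definition diag_dominant :: "'b set \<Rightarrow> ('b \<Rightarrow> 'b \<Rightarrow> complex) \<Rightarrow> bool" where
  "diag_dominant B A \<longleftrightarrow> (\<forall>x\<in>B. (\<Sum>y\<in>B. cmod (A x y)) \<le> 2 * Re (A x x))"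

definition trace_prod :: "'b set \<Rightarrow> ('b \<Rightarrow> 'b \<Rightarrow> complex) \<Rightarrow> ('b \<Rightarrow> 'b \<Rightarrow> complex) \<Rightarrow> complex" where
  "trace_prod B A X = (\<Sum>x\<in>B. \<Sum>y\<in>B. A x y * X y x)"

lemma trace_prod_id_mat: "finite B \<Longrightarrow> trace_prod B id_mat X = tr B X"
  by (simp add: trace_prod_def tr_def)

lemma trace_prod_add:
  "trace_prod B (\<lambda>x y. A x y + A' x y) X = trace_prod B A X + trace_prod B A' X"
  by (simp add: trace_prod_def distrib_right sum.distrib)

lemma trace_prod_diff_left:
  "trace_prod B (\<lambda>x y. A x y - A' x y) X = trace_prod B A X - trace_prod B A' X"
  by (simp add: trace_prod_def left_diff_distrib sum_subtractf)

lemma trace_prod_diff_right: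
  "trace_prod B A (\<lambda>x y. X x y - Y x y) = trace_prod B A X - trace_prod B A Y"
  by (simp add: trace_prod_def right_diff_distrib sum_subtractf)

lemma trace_prod_linear: "trace_prod B A (\<lambda>i j. c * X i j + Y i j) = c * trace_prod B A X + trace_prod B A Y"
  by (simp add: trace_prod_def ring_distribs sum.distrib sum_distrib_left mult.left_commute)

lemma trace_prod_commute: "trace_prod B A X = trace_prod B X A"
  unfolding trace_prod_def by (subst sum.swap) (simp add: mult.commute)

lemma trace_prod_hermitian_real:
  assumes "hermitian_on B A" "hermitian_on B G"
  shows "Im (trace_prod B A G) = 0"
proof -
  have "cnj (trace_prod B A G) = (\<Sum>x\<in>B. \<Sum>y\<in>B. cnj (A x y) * cnj (G y x))"
    by (simp add: trace_prod_def)
  also have "\<dots> = (\<Sum>x\<in>B. \<Sum>y\<in>B. A y x * G x y)"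
  proof (intro sum.cong refl)
    fix x y assume "x \<in> B" "y \<in> B"
    then show "cnj (A x y) * cnj (G y x) = A y x * G x y"
      using hermitian_onD[OF assms(1), of x y] hermitian_onD[OF assms(2), of x y] by simp
  qed
  also have "\<dots> = trace_prod B A G"
    unfolding trace_prod_def by (rule sum.swap)
  finally show ?thesis
    by (simp add: complex_eq_iff)
qed

lemma Re_entry_prod_ge:
  assumes "finite B" "hermitian_on B G" "nonneg_form_on B G" "hermitian_on B A" "x \<in> B" "y \<in> B"
  shows "Re (A x y * G y x) \<ge> (if x = y then 2 * Re (A x x) * Re (G x x) else 0)
    - cmod (A x y) * ((Re (G x x) + Re (G y y)) / 2)"
proof (cases "x = y")
  case True
  have "Im (A x x) = 0" "Im (G x x) = 0" "0 \<le> Re (G x x)"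
    using hermitian_diag_real[OF assms(4,5)] nonneg_form_diag[OF assms(1,3,5)] by auto
  moreover have "Re (A x x) * Re (G x x) \<le> \<bar>Re (A x x)\<bar> * Re (G x x)"
    using \<open>0 \<le> Re (G x x)\<close> by (simp add: mult_right_mono)
  ultimately show ?thesis
    using True by (simp add: cmod_eq_Re)
next
  case False
  have "cmod (G y x) \<le> (Re (G x x) + Re (G y y)) / 2"
    using nonneg_form_offdiag_le[OF assms(1-3,6,5)] by (simp add: add.commute)
  then have "cmod (A x y) * cmod (G y x) \<le> cmod (A x y) * ((Re (G x x) + Re (G y y)) / 2)"
    by (rule mult_left_mono) simp
  moreover have "- cmod (A x y * G y x) \<le> Re (A x y * G y x)"
    using abs_Re_le_cmod[of "A x y * G y x"] by linarith
  ultimately show ?thesis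
    using False by (simp add: norm_mult)
qed

lemma hermitian_weighted_sum_swap:
  assumes "hermitian_on B A"
  shows "(\<Sum>x\<in>B. \<Sum>y\<in>B. cmod (A x y) * g y) = (\<Sum>x\<in>B. \<Sum>y\<in>B. cmod (A x y) * g x)"
proof -
  have "(\<Sum>x\<in>B. \<Sum>y\<in>B. cmod (A x y) * g y) = (\<Sum>y\<in>B. \<Sum>x\<in>B. cmod (A x y) * g y)"
    by (rule sum.swap)
  also have "\<dots> = (\<Sum>y\<in>B. \<Sum>x\<in>B. cmod (A y x) * g y)"
    using hermitian_onD[OF assms] by (intro sum.cong refl) (metis complex_mod_cnj)
  finally show ?thesis .
qed

text \<open>Bound each off-diagonal term by \<open>|A x y| (G x x + G y y) / 2\<close> and regroup by rows, using
  \<open>|A x y| = |A y x|\<close>.\<close>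

lemma trace_prod_diag_dominant_nonneg:
  assumes B: "finite B" and G: "hermitian_on B G" "nonneg_form_on B G"
    and A: "hermitian_on B A" "diag_dominant B A"
  shows "0 \<le> Re (trace_prod B A G)"
proof -
  define g where "g x = Re (G x x)" for x
  have "0 \<le> (\<Sum>x\<in>B. g x * (2 * Re (A x x) - (\<Sum>y\<in>B. cmod (A x y))))"
    using A(2) nonneg_form_diag[OF B G(2)] by (intro sum_nonneg) (simp add: g_def diag_dominant_def)
  also have "\<dots> = (\<Sum>x\<in>B. 2 * Re (A x x) * g x)
      - (\<Sum>x\<in>B. \<Sum>y\<in>B. cmod (A x y) * g x) / 2 - (\<Sum>x\<in>B. \<Sum>y\<in>B. cmod (A x y) * g y) / 2"
    unfolding hermitian_weighted_sum_swap[OF A(1)]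
    by (simp add: sum_subtractf sum_distrib_left sum_distrib_right algebra_simps)
  also have "\<dots> = (\<Sum>x\<in>B. \<Sum>y\<in>B. (if x = y then 2 * Re (A x x) * g x else 0)
      - cmod (A x y) * g x / 2 - cmod (A x y) * g y / 2)"
    using B by (simp add: sum_subtractf sum_divide_distrib[symmetric] sum.distrib)
  also have "\<dots> = (\<Sum>x\<in>B. \<Sum>y\<in>B. (if x = y then 2 * Re (A x x) * g x else 0)
      - cmod (A x y) * ((g x + g y) / 2))"
    by (intro sum.cong refl) (simp add: field_simps)
  also have "\<dots> \<le> (\<Sum>x\<in>B. \<Sum>y\<in>B. Re (A x y * G y x))"
    unfolding g_def by (intro sum_mono Re_entry_prod_ge[OF B G A(1)])
  also have "\<dots> = Re (trace_prod B A G)"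
    by (simp add: trace_prod_def)
  finally show ?thesis .
qed

section \<open>Measure-and-prepare channels\<close>

lemma sum_swap_outer_pairs:
  "(\<Sum>a\<in>K. \<Sum>b\<in>L. \<Sum>c\<in>M. \<Sum>d\<in>N. h a b c d) = (\<Sum>c\<in>M. \<Sum>d\<in>N. \<Sum>a\<in>K. \<Sum>b\<in>L. h a b c d)"
proof -
  have "(\<Sum>a\<in>K. \<Sum>b\<in>L. \<Sum>c\<in>M. \<Sum>d\<in>N. h a b c d) = (\<Sum>a\<in>K. \<Sum>c\<in>M. \<Sum>b\<in>L. \<Sum>d\<in>N. h a b c d)"
    by (rule sum.cong[OF refl], rule sum.swap)
  also have "\<dots> = (\<Sum>c\<in>M. \<Sum>a\<in>K. \<Sum>b\<in>L. \<Sum>d\<in>N. h a b c d)"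
    by (rule sum.swap)
  also have "\<dots> = (\<Sum>c\<in>M. \<Sum>a\<in>K. \<Sum>d\<in>N. \<Sum>b\<in>L. h a b c d)"
    by (rule sum.cong[OF refl], rule sum.cong[OF refl], rule sum.swap)
  also have "\<dots> = (\<Sum>c\<in>M. \<Sum>d\<in>N. \<Sum>a\<in>K. \<Sum>b\<in>L. h a b c d)"
    by (rule sum.cong[OF refl], rule sum.swap)
  finally show ?thesis .
qed

text \<open>\<open>compress k X w\<close> is \<open>(w\<^sup>* \<otimes> I) X (w \<otimes> I)\<close>, and \<open>block_pairing B A X\<close> is
  \<open>(id \<otimes> tr (A \<cdot>)) X\<close>, for \<open>X\<close> acting on \<open>\<complex>\<^sup>k \<otimes> \<complex>\<^sup>B\<close>.\<close>

definition compress :: "nat \<Rightarrow> (nat \<times> 'b \<Rightarrow> nat \<times> 'b \<Rightarrow> complex) \<Rightarrow> (nat \<Rightarrow> complex) \<Rightarrow> 'b \<Rightarrow> 'b \<Rightarrow> complex" where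
  "compress k X w x y = (\<Sum>a<k. \<Sum>b<k. cnj (w a) * X (a, x) (b, y) * w b)"

definition block_pairing :: "'b set \<Rightarrow> ('b \<Rightarrow> 'b \<Rightarrow> complex) \<Rightarrow> (nat \<times> 'b \<Rightarrow> nat \<times> 'b \<Rightarrow> complex) \<Rightarrow> nat \<Rightarrow> nat \<Rightarrow> complex" where
  "block_pairing B A X a b = trace_prod B A (\<lambda>x y. X (a, x) (b, y))"

lemma quad_form_compress:
  "quad_form B (compress k X w) v = quad_form ({..<k} \<times> B) X (\<lambda>p. w (fst p) * v (snd p))"
proof -
  have "quad_form B (compress k X w) v
      = (\<Sum>x\<in>B. \<Sum>y\<in>B. \<Sum>a<k. \<Sum>b<k. cnj (w a * v x) * X (a, x) (b, y) * (w b * v y))"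
    by (simp add: quad_form_def compress_def sum_distrib_left sum_distrib_right mult_ac)
  also have "\<dots> = (\<Sum>a<k. \<Sum>b<k. \<Sum>x\<in>B. \<Sum>y\<in>B. cnj (w a * v x) * X (a, x) (b, y) * (w b * v y))"
    by (rule sum_swap_outer_pairs)
  also have "\<dots> = (\<Sum>a<k. \<Sum>x\<in>B. \<Sum>b<k. \<Sum>y\<in>B. cnj (w a * v x) * X (a, x) (b, y) * (w b * v y))"
    by (rule sum.cong[OF refl], rule sum.swap)
  also have "\<dots> = quad_form ({..<k} \<times> B) X (\<lambda>p. w (fst p) * v (snd p))"
    by (simp add: quad_form_def sum.cartesian_product')
  finally show ?thesis .
qed

lemma hermitian_compress:
  assumes "hermitian_on ({..<k} \<times> B) X"
  shows "hermitian_on B (compress k X w)"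
  unfolding hermitian_on_def
proof (intro ballI)
  fix x y assume "x \<in> B" "y \<in> B"
  then have "cnj (compress k X w x y) = (\<Sum>a<k. \<Sum>b<k. w a * X (b, y) (a, x) * cnj (w b))"
    using hermitian_on_cnj[OF assms] by (simp add: compress_def)
  also have "\<dots> = compress k X w y x"
    unfolding compress_def by (subst sum.swap) (simp add: mult_ac)
  finally show "compress k X w y x = cnj (compress k X w x y)" ..
qed

lemma quad_form_block_pairing:
  "quad_form {..<k} (block_pairing B A X) w = trace_prod B A (compress k X w)"
proof -
  have "quad_form {..<k} (block_pairing B A X) w
      = (\<Sum>a<k. \<Sum>b<k. \<Sum>x\<in>B. \<Sum>y\<in>B. A x y * (cnj (w a) * X (a, y) (b, x) * w b))"
    by (simp add: quad_form_def block_pairing_def trace_prod_def sum_distrib_left sum_distrib_right mult_ac)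
  also have "\<dots> = (\<Sum>x\<in>B. \<Sum>y\<in>B. \<Sum>a<k. \<Sum>b<k. A x y * (cnj (w a) * X (a, y) (b, x) * w b))"
    by (rule sum_swap_outer_pairs)
  also have "\<dots> = trace_prod B A (compress k X w)"
    by (simp add: trace_prod_def compress_def sum_distrib_left)
  finally show ?thesis .
qed

lemma psd_block_pairing:
  assumes B: "finite B" and A: "hermitian_on B A" "diag_dominant B A"
    and X: "psd ({..<k} \<times> B) X"
  shows "psd {..<k} (block_pairing B A X)"
  unfolding psd_iff
proof (intro conjI)
  have op: "op_on ({..<k} \<times> B) X" and herm: "hermitian_on ({..<k} \<times> B) X"
    and form: "nonneg_form_on ({..<k} \<times> B) X"
    using X unfolding psd_iff by auto
  show "op_on {..<k} (block_pairing B A X)"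
    unfolding op_on_def
  proof (intro allI impI)
    fix a b assume "a \<notin> {..<k} \<or> b \<notin> {..<k}"
    then have "X (a, x) (b, y) = 0" for x y
      using op unfolding op_on_def by blast
    then show "block_pairing B A X a b = 0"
      by (simp add: block_pairing_def trace_prod_def)
  qed
  show "hermitian_on {..<k} (block_pairing B A X)"
    unfolding hermitian_on_def
  proof (intro ballI)
    fix a b assume "a \<in> {..<k}" "b \<in> {..<k}"
    then have "cnj (block_pairing B A X a b) = (\<Sum>x\<in>B. \<Sum>y\<in>B. A y x * X (b, x) (a, y))"
      using hermitian_on_cnj[OF A(1)] hermitian_on_cnj[OF herm] by (simp add: block_pairing_def trace_prod_def)
    also have "\<dots> = block_pairing B A X b a"
      unfolding block_pairing_def trace_prod_def by (rule sum.swap)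
    finally show "block_pairing B A X b a = cnj (block_pairing B A X a b)" ..
  qed
  show "nonneg_form_on {..<k} (block_pairing B A X)"
    unfolding nonneg_form_on_def quad_form_block_pairing
  proof
    fix w
    have "nonneg_form_on B (compress k X w)"
      using form by (simp add: nonneg_form_on_def quad_form_compress)
    then show "Im (trace_prod B A (compress k X w)) = 0 \<and> 0 \<le> Re (trace_prod B A (compress k X w))"
      using trace_prod_hermitian_real[OF A(1) hermitian_compress[OF herm]]
        trace_prod_diag_dominant_nonneg[OF B hermitian_compress[OF herm] _ A] by simp
  qed
qed

lemma sum_lessThan_2: "(\<Sum>s<(2::nat). g s) = g 0 + g 1"
  by (simp add: numeral_2_eq_2)

definition block_diag2 :: "(nat \<Rightarrow> nat \<Rightarrow> complex) \<Rightarrow> (nat \<Rightarrow> nat \<Rightarrow> complex) \<Rightarrow>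
    nat \<times> nat \<Rightarrow> nat \<times> nat \<Rightarrow> complex" where
  "block_diag2 P Q u w =
     (if snd u = 0 \<and> snd w = 0 then P (fst u) (fst w)
      else if snd u = 1 \<and> snd w = 1 then Q (fst u) (fst w) else 0)"

lemma quad_form_block_diag2:
  "quad_form ({..<k} \<times> {..<2}) (block_diag2 P Q) v =
     quad_form {..<k} P (\<lambda>a. v (a, 0)) + quad_form {..<k} Q (\<lambda>a. v (a, 1))"
proof -
  have "quad_form ({..<k} \<times> {..<2}) (block_diag2 P Q) v
      = (\<Sum>a<k. \<Sum>s<2. \<Sum>b<k. \<Sum>t<2. cnj (v (a, s)) * block_diag2 P Q (a, s) (b, t) * v (b, t))"
    by (simp only: quad_form_def sum.cartesian_product')
  also have "\<dots> = quad_form {..<k} P (\<lambda>a. v (a, 0)) + quad_form {..<k} Q (\<lambda>a. v (a, 1))"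
    by (simp add: quad_form_def block_diag2_def sum_lessThan_2 sum.distrib)
  finally show ?thesis .
qed

lemma psd_block_diag2:
  assumes P: "psd {..<k} P" and Q: "psd {..<k} Q"
  shows "psd ({..<k} \<times> {..<2}) (block_diag2 P Q)"
  unfolding psd_iff
proof (intro conjI)
  show "op_on ({..<k} \<times> {..<2}) (block_diag2 P Q)"
    using P Q by (auto simp: psd_iff op_on_def block_diag2_def)
  show "hermitian_on ({..<k} \<times> {..<2}) (block_diag2 P Q)"
    unfolding hermitian_on_def
  proof (intro ballI)
    fix u w assume "u \<in> {..<k} \<times> {..<2::nat}" "w \<in> {..<k} \<times> {..<2::nat}"
    then show "block_diag2 P Q w u = cnj (block_diag2 P Q u w)"
      using P Q hermitian_onD[of "{..<k}" P "fst u" "fst w"] hermitian_onD[of "{..<k}" Q "fst u" "fst w"]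
      by (auto simp: psd_iff block_diag2_def)
  qed
  show "nonneg_form_on ({..<k} \<times> {..<2}) (block_diag2 P Q)"
    using P Q by (simp add: psd_iff nonneg_form_on_def quad_form_block_diag2)
qed

definition effect_compl :: "('b \<Rightarrow> 'b \<Rightarrow> complex) \<Rightarrow> 'b \<Rightarrow> 'b \<Rightarrow> complex" where
  "effect_compl A x y = id_mat x y - A x y"

definition measure_prepare :: "'b set \<Rightarrow> ('b \<Rightarrow> 'b \<Rightarrow> complex) \<Rightarrow> ('b \<Rightarrow> 'b \<Rightarrow> complex) \<Rightarrow> nat \<Rightarrow> nat \<Rightarrow> complex" where
  "measure_prepare B A X a b =
     (if a = 0 \<and> b = 0 then trace_prod B A X
      else if a = 1 \<and> b = 1 then trace_prod B (effect_compl A) X else 0)"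

lemma trace_prod_effect_compl: "finite B \<Longrightarrow> trace_prod B (effect_compl A) X = tr B X - trace_prod B A X"
  by (simp add: trace_prod_def effect_compl_def tr_def left_diff_distrib sum_subtractf)

lemma channel_measure_prepare:
  assumes B: "finite B" and A: "hermitian_on B A" "diag_dominant B A"
    and A': "hermitian_on B (effect_compl A)" "diag_dominant B (effect_compl A)"
  shows "channel B 2 (measure_prepare B A)"
  unfolding channel_def
proof (intro conjI allI impI)
  fix X Y :: "'a \<Rightarrow> 'a \<Rightarrow> complex" and c
  show "measure_prepare B A (\<lambda>i j. c * X i j + Y i j) = (\<lambda>i j. c * measure_prepare B A X i j + measure_prepare B A Y i j)"
    by (simp add: fun_eq_iff measure_prepare_def trace_prod_linear)
next
  fix X :: "'a \<Rightarrow> 'a \<Rightarrow> complex"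
  show "op_on {..<2} (measure_prepare B A X)"
    by (simp add: op_on_def measure_prepare_def)
  show "tr {..<2} (measure_prepare B A X) = tr B X"
    using B by (simp add: tr_def sum_lessThan_2 measure_prepare_def trace_prod_effect_compl)
next
  fix k :: nat and X
  assume X: "psd ({..<k} \<times> B) X"
  have "(\<lambda>u w. measure_prepare B A (\<lambda>x y. X (fst u, x) (fst w, y)) (snd u) (snd w))
      = block_diag2 (block_pairing B A X) (block_pairing B (effect_compl A) X)"
    by (simp add: fun_eq_iff measure_prepare_def block_diag2_def block_pairing_def)
  then show "psd ({..<k} \<times> {..<2}) (\<lambda>u w. measure_prepare B A (\<lambda>x y. X (fst u, x) (fst w, y)) (snd u) (snd w))"
    using psd_block_diag2[OF psd_block_pairing[OF B A X] psd_block_pairing[OF B A' X]] by simp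
qed

lemma channel_measure_prepare_id_mat: "finite B \<Longrightarrow> channel B 2 (measure_prepare B id_mat)"
  by (intro channel_measure_prepare)
    (auto simp: hermitian_on_def diag_dominant_def effect_compl_def id_mat_def if_distrib[of cmod] cong: if_cong)

section \<open>Excluding a measure-and-prepare channel\<close>

text \<open>Channel 1 always prepares \<open>|0\<rangle>\<close>, so the optimal POVM excludes channel 0 on \<open>|0\<rangle>\<close> and
  channel 1 on \<open>|1\<rangle>\<close>; it errs only when channel 0 outputs \<open>|0\<rangle>\<close>.\<close>

definition test_ensemble :: "'b set \<Rightarrow> ('b \<Rightarrow> 'b \<Rightarrow> complex) \<Rightarrow> nat \<Rightarrow> ('b \<Rightarrow> 'b \<Rightarrow> complex) \<Rightarrow> nat \<Rightarrow> nat \<Rightarrow> complex" where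
  "test_ensemble B A i = measure_prepare B (if i = 0 then A else id_mat)"

lemma ensemble_test_ensemble:
  assumes "finite B" "channel B 2 (measure_prepare B A)"
  shows "ensemble B 2 2 (\<lambda>_. 1/2) (test_ensemble B A)"
  using assms channel_measure_prepare_id_mat[OF assms(1)]
  by (simp add: ensemble_def test_ensemble_def sum_lessThan_2 less_2_cases_iff)

definition basis_povm :: "nat \<Rightarrow> nat \<Rightarrow> nat \<Rightarrow> complex" where
  "basis_povm i a b = id_mat i a * id_mat i b"

lemma povm_basis_povm: "povm 2 2 basis_povm"
  unfolding povm_def
proof (intro conjI allI impI)
  fix i :: nat assume "i < 2"
  have "Im (quad_form {..<2} (basis_povm i) v) = 0 \<and> 0 \<le> Re (quad_form {..<2} (basis_povm i) v)" for v
  proof -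
    have "quad_form {..<2} (basis_povm i) v = cnj (v i) * v i"
      using \<open>i < 2\<close> by (simp add: quad_form_def basis_povm_def if_zero_mult cong: if_cong)
    also have "\<dots> = of_real ((cmod (v i))\<^sup>2)"
      by (subst complex_norm_square) (rule mult.commute)
    finally show ?thesis
      by (metis Im_complex_of_real Re_complex_of_real zero_le_power2)
  qed
  then show "psd {..<2} (basis_povm i)"
    using \<open>i < 2\<close> by (auto simp: psd_iff op_on_def hermitian_on_def nonneg_form_on_def basis_povm_def id_mat_def)
next
  fix a b :: nat
  show "(\<Sum>i<2. basis_povm i a b) = (if a = b \<and> a < 2 then 1 else 0)"
    by (auto simp: sum_lessThan_2 basis_povm_def id_mat_def)
qed

lemma perr_test_ensemble:
  assumes "finite B" "tr B \<omega> = 1" "trace_prod B A \<omega> = of_real r"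
  shows "perr 2 2 (\<lambda>_. 1/2) (test_ensemble B A) M \<omega> =
    (r * Re (M 0 0 0) + (1 - r) * Re (M 0 1 1) + Re (M 1 0 0)) / 2"
  using assms by (simp add: perr_def test_ensemble_def measure_prepare_def sum_lessThan_2
      trace_prod_effect_compl trace_prod_id_mat field_simps)

lemma minerr_test_ensemble:
  assumes B: "finite B" and \<omega>: "tr B \<omega> = 1" "trace_prod B A \<omega> = of_real r" and r: "0 \<le> r" "r \<le> 1"
  shows "minerr 2 2 (\<lambda>_. 1/2) (test_ensemble B A) \<omega> = r / 2"
  unfolding minerr_def
proof (rule cInf_eq_minimum)
  show "r / 2 \<in> {perr 2 2 (\<lambda>_. 1/2) (test_ensemble B A) M \<omega> |M. povm 2 2 M}"
    using povm_basis_povm perr_test_ensemble[OF B \<omega>, of basis_povm]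
    by (force simp: basis_povm_def id_mat_def)
next
  fix x assume "x \<in> {perr 2 2 (\<lambda>_. 1/2) (test_ensemble B A) M \<omega> |M. povm 2 2 M}"
  then obtain M where x: "x = perr 2 2 (\<lambda>_. 1/2) (test_ensemble B A) M \<omega>" and M: "povm 2 2 M"
    by blast
  have "nonneg_form_on {..<2} (M 0)" "nonneg_form_on {..<2} (M 1)"
    using M by (auto simp: povm_def psd_iff)
  then have "0 \<le> Re (M 0 1 1)" "0 \<le> Re (M 1 0 0)"
    using nonneg_form_diag[of "{..<2::nat}" "M 0" 1] nonneg_form_diag[of "{..<2::nat}" "M 1" 0] by auto
  moreover have "M 0 0 0 + M 1 0 0 = 1"
    using M unfolding povm_def by (metis sum_lessThan_2 pos2)
  then have "r = r * Re (M 0 0 0) + r * Re (M 1 0 0)"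
    by (metis Re_complex_of_real distrib_left mult.right_neutral of_real_1 plus_complex.sel(1))
  ultimately show "r / 2 \<le> x"
    unfolding x perr_test_ensemble[OF B \<omega>] using r mult_left_le_one_le[of "Re (M 0 1 1)" r]
      mult_left_le_one_le[of "Re (M 1 0 0)" r]
    by (simp add: field_simps)
qed

section \<open>Effects close to a multiple of the identity\<close>

definition shift_effect :: "real \<Rightarrow> ('b \<Rightarrow> 'b \<Rightarrow> complex) \<Rightarrow> 'b \<Rightarrow> 'b \<Rightarrow> complex" where
  "shift_effect k W x y = (of_real k * id_mat x y + W x y) / of_real (2 * k)"

lemma effect_compl_shift_effect:
  "k \<noteq> 0 \<Longrightarrow> effect_compl (shift_effect k W) = shift_effect k (\<lambda>x y. - W x y)"
  by (simp add: fun_eq_iff effect_compl_def shift_effect_def id_mat_def field_simps)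

lemma hermitian_shift_effect:
  assumes "hermitian_on B W"
  shows "hermitian_on B (shift_effect k W)"
  unfolding hermitian_on_def
proof (intro ballI)
  fix x y assume "x \<in> B" "y \<in> B"
  then show "shift_effect k W y x = cnj (shift_effect k W x y)"
    using hermitian_onD[OF assms, of x y] by (simp add: shift_effect_def id_mat_commute)
qed

lemma cmod_shift_effect_le:
  assumes "0 < k" "cmod (W x y) \<le> c"
  shows "cmod (shift_effect k W x y) \<le> (k * Re (id_mat x y) + c) / (2 * k)"
proof -
  have "cmod (of_real k * id_mat x y + W x y) \<le> cmod (of_real k * id_mat x y) + cmod (W x y)"
    by (rule norm_triangle_ineq)
  also have "cmod (of_real k * id_mat x y) = k * Re (id_mat x y)"
    using assms(1) by (simp add: id_mat_def)
  finally have "cmod (of_real k * id_mat x y + W x y) \<le> k * Re (id_mat x y) + c"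
    using assms(2) by linarith
  then show ?thesis
    using assms(1) by (simp add: shift_effect_def norm_divide divide_right_mono)
qed

lemma diag_dominant_shift_effect:
  assumes B: "finite B" and k: "0 < k" and W: "\<And>x y. x \<in> B \<Longrightarrow> y \<in> B \<Longrightarrow> cmod (W x y) \<le> c"
    and c: "c * (real (card B) + 2) \<le> k"
  shows "diag_dominant B (shift_effect k W)"
  unfolding diag_dominant_def
proof
  fix x assume x: "x \<in> B"
  have row: "(\<Sum>y\<in>B. Re (id_mat x y)) = 1"
    using B x by (simp add: id_mat_def if_distrib[of Re] cong: if_cong)
  have "(\<Sum>y\<in>B. cmod (shift_effect k W x y)) \<le> (\<Sum>y\<in>B. (k * Re (id_mat x y) + c) / (2 * k))"
    using x by (intro sum_mono cmod_shift_effect_le[OF k] W)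
  also have "\<dots> = (k + c * card B) / (2 * k)"
    using row by (simp add: sum_divide_distrib[symmetric] sum.distrib sum_distrib_left[symmetric])
  also have "\<dots> \<le> 2 * (k - c) / (2 * k)"
    using c k by (intro divide_right_mono) (simp_all add: algebra_simps)
  also have "\<dots> \<le> 2 * Re (shift_effect k W x x)"
    using k W[OF x x] abs_Re_le_cmod[of "W x x"] by (simp add: shift_effect_def id_mat_def divide_right_mono)
  finally show "(\<Sum>y\<in>B. cmod (shift_effect k W x y)) \<le> 2 * Re (shift_effect k W x x)" .
qed

lemma channel_shift_effect:
  assumes B: "finite B" and k: "0 < k" and W: "hermitian_on B W"
    and bound: "\<And>x y. x \<in> B \<Longrightarrow> y \<in> B \<Longrightarrow> cmod (W x y) \<le> c" and c: "c * (real (card B) + 2) \<le> k"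
  shows "channel B 2 (measure_prepare B (shift_effect k W))"
proof -
  have compl: "effect_compl (shift_effect k W) = shift_effect k (\<lambda>x y. - W x y)"
    using k by (simp add: effect_compl_shift_effect)
  show ?thesis
  proof (rule channel_measure_prepare[OF B])
    show "hermitian_on B (shift_effect k W)"
      by (rule hermitian_shift_effect[OF W])
    show "diag_dominant B (shift_effect k W)"
      by (rule diag_dominant_shift_effect[OF B k bound c])
    have "hermitian_on B (\<lambda>x y. - W x y)"
      using hermitian_onD[OF W] unfolding hermitian_on_def by (metis complex_cnj_minus)
    then show "hermitian_on B (effect_compl (shift_effect k W))"
      unfolding compl by (rule hermitian_shift_effect)
    show "diag_dominant B (effect_compl (shift_effect k W))"
      unfolding compl by (rule diag_dominant_shift_effect[OF B k _ c]) (simp add: bound)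
  qed
qed

lemma trace_prod_shift_effect:
  assumes "finite B"
  shows "trace_prod B (shift_effect k W) X = (of_real k * tr B X + trace_prod B W X) / of_real (2 * k)"
proof -
  have "trace_prod B (shift_effect k W) X
      = (\<Sum>x\<in>B. \<Sum>y\<in>B. (of_real k * id_mat x y + W x y) * X y x) / of_real (2 * k)"
    by (simp add: trace_prod_def shift_effect_def sum_divide_distrib)
  also have "(\<Sum>x\<in>B. \<Sum>y\<in>B. (of_real k * id_mat x y + W x y) * X y x) = of_real k * tr B X + trace_prod B W X"
    using assms by (simp add: trace_prod_def tr_def distrib_right sum.distrib sum_distrib_left mult.assoc
        if_zero_mult cong: if_cong)
  finally show ?thesis .
qed

section \<open>Two copies and the swap trick\<close>

lemma words_2_cases:
  assumes "xs \<in> words 2"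
  obtains a b where "xs = [a, b]"
  using assms unfolding words_def by (auto simp: numeral_2_eq_2 length_Suc_conv)

lemma finite_words: "finite (words m :: 'n::finite list set)"
  unfolding words_def using finite_lists_length_eq[of "UNIV :: 'n set" m] by simp

lemma card_words: "card (words m :: 'n::finite list set) = CARD('n) ^ m"
  unfolding words_def using card_lists_length_eq[of "UNIV :: 'n set" m] by simp

lemma sum_words_2: "(\<Sum>xs\<in>words 2. f xs) = (\<Sum>a\<in>UNIV. \<Sum>b\<in>UNIV. f [a, b :: 'n::finite])"
proof -
  have "words 2 = (\<lambda>(a, b). [a, b :: 'n]) ` UNIV"
  proof
    show "words 2 \<subseteq> (\<lambda>(a, b). [a, b :: 'n]) ` UNIV"
    proof
      fix xs :: "'n list" assume "xs \<in> words 2"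
      then obtain a b where "xs = [a, b]" by (rule words_2_cases)
      then show "xs \<in> (\<lambda>(a, b). [a, b]) ` UNIV" by auto
    qed
  qed (auto simp: words_def)
  moreover have "inj (\<lambda>(a, b). [a, b :: 'n])"
    by (auto simp: inj_def)
  ultimately show ?thesis
    by (simp add: sum.reindex sum.cartesian_product' flip: UNIV_Times_UNIV)
qed

lemma tpow_2: "tpow 2 s [a, b] [c, d] = s a c * s b d"
  by (simp add: tpow_def numeral_2_eq_2)

lemma tr_tpow_2:
  fixes s :: "'n::finite \<Rightarrow> 'n \<Rightarrow> complex"
  shows "tr (words 2) (tpow 2 s) = tr UNIV s ^ 2"
  by (simp add: tr_def sum_words_2 tpow_2 sum_product power2_eq_square)

definition kron2 :: "('n \<Rightarrow> 'n \<Rightarrow> complex) \<Rightarrow> ('n \<Rightarrow> 'n \<Rightarrow> complex) \<Rightarrow> 'n list \<Rightarrow> 'n list \<Rightarrow> complex" where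
  "kron2 A B xs ys = A (xs ! 0) (ys ! 0) * B (xs ! 1) (ys ! 1)"

definition swap_mat :: "'n list \<Rightarrow> 'n list \<Rightarrow> complex" where
  "swap_mat xs ys = id_mat (xs ! 0) (ys ! 1) * id_mat (xs ! 1) (ys ! 0)"

definition distance_witness :: "('n \<Rightarrow> 'n \<Rightarrow> complex) \<Rightarrow> 'n list \<Rightarrow> 'n list \<Rightarrow> complex" where
  "distance_witness r xs ys = swap_mat xs ys - (kron2 r id_mat xs ys + kron2 id_mat r xs ys)"

lemma trace_prod_kron2_tpow_2:
  fixes A B s :: "'n::finite \<Rightarrow> 'n \<Rightarrow> complex"
  shows "trace_prod (words 2) (kron2 A B) (tpow 2 s) = trace_prod UNIV A s * trace_prod UNIV B s"
proof -
  have "trace_prod (words 2) (kron2 A B) (tpow 2 s)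
      = (\<Sum>a\<in>UNIV. \<Sum>b\<in>UNIV. \<Sum>c\<in>UNIV. \<Sum>d\<in>UNIV. (A a c * s c a) * (B b d * s d b))"
    by (simp add: trace_prod_def sum_words_2 tpow_2 kron2_def mult_ac)
  also have "\<dots> = (\<Sum>a\<in>UNIV. \<Sum>c\<in>UNIV. \<Sum>b\<in>UNIV. \<Sum>d\<in>UNIV. (A a c * s c a) * (B b d * s d b))"
    by (rule sum.cong[OF refl], rule sum.swap)
  also have "\<dots> = (\<Sum>b\<in>UNIV. \<Sum>d\<in>UNIV. \<Sum>a\<in>UNIV. \<Sum>c\<in>UNIV. (A a c * s c a) * (B b d * s d b))"
    by (rule sum_swap_outer_pairs)
  also have "\<dots> = trace_prod UNIV A s * trace_prod UNIV B s"
    by (simp add: trace_prod_def sum_distrib_left sum_distrib_right)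
  finally show ?thesis .
qed

lemma trace_prod_swap_tpow_2:
  fixes s :: "'n::finite \<Rightarrow> 'n \<Rightarrow> complex"
  shows "trace_prod (words 2) swap_mat (tpow 2 s) = trace_prod UNIV s s"
  by (simp add: trace_prod_def sum_words_2 tpow_2 swap_mat_def if_zero_mult sum_if_zero mult.commute
      cong: if_cong)

definition hs_norm_sq :: "('n::finite \<Rightarrow> 'n \<Rightarrow> complex) \<Rightarrow> real" where
  "hs_norm_sq X = (\<Sum>a\<in>UNIV. \<Sum>b\<in>UNIV. (cmod (X a b))\<^sup>2)"

lemma hs_norm_sq_hermitian:
  assumes "hermitian_on UNIV X"
  shows "of_real (hs_norm_sq X) = trace_prod UNIV X X"
proof -
  have "of_real (hs_norm_sq X) = (\<Sum>a\<in>UNIV. \<Sum>b\<in>UNIV. X a b * cnj (X a b))"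
    by (simp add: hs_norm_sq_def flip: complex_norm_square)
  also have "\<dots> = trace_prod UNIV X X"
    using hermitian_on_cnj[OF assms] by (simp add: trace_prod_def)
  finally show ?thesis .
qed

lemma hs_norm_sq_le:
  fixes X :: "'n::finite \<Rightarrow> 'n \<Rightarrow> complex"
  assumes "\<And>a b. cmod (X a b) \<le> c"
  shows "hs_norm_sq X \<le> real CARD('n) ^ 2 * c ^ 2"
proof -
  have "hs_norm_sq X \<le> (\<Sum>a\<in>(UNIV :: 'n set). \<Sum>b\<in>(UNIV :: 'n set). c ^ 2)"
    unfolding hs_norm_sq_def by (intro sum_mono power_mono assms norm_ge_zero)
  then show ?thesis
    by (simp add: power2_eq_square)
qed

lemma hs_norm_sq_mfun: "hs_norm_sq (mfun A) = (norm A)\<^sup>2"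
  by (simp add: hs_norm_sq_def mfun_def norm_vec_def L2_set_def sum_nonneg)

lemma hermitian_distance_witness:
  assumes "hermitian_on UNIV r"
  shows "hermitian_on B (distance_witness r)"
  unfolding hermitian_on_def
proof (intro ballI)
  fix xs ys :: "'a list"
  have "swap_mat ys xs = cnj (swap_mat xs ys)"
    by (simp add: swap_mat_def id_mat_def)
  moreover have "kron2 r id_mat ys xs = cnj (kron2 r id_mat xs ys)"
    using hermitian_onD[OF assms, of "xs ! 0" "ys ! 0"] by (simp add: kron2_def id_mat_def)
  moreover have "kron2 id_mat r ys xs = cnj (kron2 id_mat r xs ys)"
    using hermitian_onD[OF assms, of "xs ! 1" "ys ! 1"] by (simp add: kron2_def id_mat_def)
  ultimately show "distance_witness r ys xs = cnj (distance_witness r xs ys)"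
    by (simp add: distance_witness_def)
qed

lemma cmod_distance_witness_le:
  assumes "\<And>i j. cmod (r i j) \<le> 1"
  shows "cmod (distance_witness r xs ys) \<le> 3"
proof -
  have "cmod (swap_mat xs ys) \<le> 1"
    by (simp add: swap_mat_def id_mat_def)
  moreover have "cmod (kron2 r id_mat xs ys) \<le> 1" "cmod (kron2 id_mat r xs ys) \<le> 1"
    using assms by (simp_all add: kron2_def id_mat_def)
  ultimately show ?thesis
    unfolding distance_witness_def
    by (smt (verit) norm_triangle_ineq norm_triangle_ineq4)
qed

lemma trace_prod_distance_witness:
  fixes r s :: "'n::finite \<Rightarrow> 'n \<Rightarrow> complex"
  assumes s: "hermitian_on UNIV s" "tr UNIV s = 1" and r: "hermitian_on UNIV r"
  shows "trace_prod (words 2) (distance_witness r) (tpow 2 s)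
    = of_real (hs_norm_sq (\<lambda>a b. s a b - r a b) - hs_norm_sq r)"
proof -
  have "hermitian_on UNIV (\<lambda>a b. s a b - r a b)"
    using s(1) r unfolding hermitian_on_def by (metis complex_cnj_diff)
  then have "of_real (hs_norm_sq (\<lambda>a b. s a b - r a b))
      = trace_prod UNIV s s - 2 * trace_prod UNIV r s + trace_prod UNIV r r"
    by (simp add: hs_norm_sq_hermitian trace_prod_diff_left trace_prod_diff_right
        trace_prod_commute[of UNIV s r])
  then show ?thesis
    using s(2)
    by (simp add: hs_norm_sq_hermitian[OF r] distance_witness_def[abs_def] trace_prod_diff_left
        trace_prod_add trace_prod_swap_tpow_2 trace_prod_kron2_tpow_2 trace_prod_id_mat
        trace_prod_commute[of UNIV s r])
qed

section \<open>Separating a non-free state\<close>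

lemma density_hermitian: "density B s \<Longrightarrow> hermitian_on B s"
  by (simp add: density_def psd_iff)

lemma density_cmod_le_one:
  assumes B: "finite B" and s: "density B s" and ij: "i \<in> B" "j \<in> B"
  shows "cmod (s i j) \<le> 1"
proof -
  have form: "nonneg_form_on B s" and tr: "tr B s = 1"
    using s by (auto simp: density_def psd_iff)
  have diag: "Re (s x x) \<le> 1" if "x \<in> B" for x
  proof -
    have "Re (s x x) \<le> (\<Sum>y\<in>B. Re (s y y))"
      using B that nonneg_form_diag[OF B form] by (intro member_le_sum) auto
    also have "\<dots> = 1"
      using tr by (simp add: tr_def flip: Re_sum)
    finally show ?thesis .
  qed
  show ?thesis
    using nonneg_form_offdiag_le[OF B density_hermitian[OF s] form ij] diag[OF ij(1)] diag[OF ij(2)]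
    by simp
qed

lemma hs_norm_sq_density_le:
  fixes r :: "'n::finite \<Rightarrow> 'n \<Rightarrow> complex"
  assumes "density UNIV r"
  shows "hs_norm_sq r \<le> real CARD('n) ^ 2"
  using hs_norm_sq_le[of r 1] density_cmod_le_one[OF finite_class.finite_UNIV assms] by simp

lemma minerr_distance_test:
  fixes r s :: "'n::finite \<Rightarrow> 'n \<Rightarrow> complex"
  assumes r: "density UNIV r" and s: "density UNIV s" and k: "4 * real CARD('n) ^ 2 \<le> k"
  shows "minerr 2 2 (\<lambda>_. 1/2) (test_ensemble (words 2) (shift_effect k (distance_witness r))) (tpow 2 s)
    = (k - hs_norm_sq r + hs_norm_sq (\<lambda>a b. s a b - r a b)) / (4 * k)"
proof -
  define t where "t = hs_norm_sq (\<lambda>a b. s a b - r a b) - hs_norm_sq r"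
  have "0 < k"
    using k by (smt (verit) of_nat_0_less_iff zero_less_card_finite zero_less_power)
  have tr_s: "tr UNIV s = 1"
    using s by (simp add: density_def)
  have "cmod (s a b - r a b) \<le> 2" for a b
    using norm_triangle_ineq4[of "s a b" "r a b"] density_cmod_le_one[OF finite_class.finite_UNIV s]
      density_cmod_le_one[OF finite_class.finite_UNIV r] by (smt (verit) UNIV_I)
  then have "hs_norm_sq (\<lambda>a b. s a b - r a b) \<le> 4 * real CARD('n) ^ 2"
    using hs_norm_sq_le[of "\<lambda>a b. s a b - r a b" 2] by simp
  moreover have "0 \<le> hs_norm_sq (\<lambda>a b. s a b - r a b)" "0 \<le> hs_norm_sq r"
    by (simp_all add: hs_norm_sq_def sum_nonneg)
  ultimately have t: "- k \<le> t" "t \<le> k"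
    using hs_norm_sq_density_le[OF r] k unfolding t_def by linarith+
  have "trace_prod (words 2) (shift_effect k (distance_witness r)) (tpow 2 s) = of_real ((k + t) / (2 * k))"
    using trace_prod_distance_witness[OF density_hermitian[OF s] tr_s density_hermitian[OF r]]
    by (simp add: trace_prod_shift_effect finite_words tr_tpow_2 tr_s t_def)
  then have "minerr 2 2 (\<lambda>_. 1/2) (test_ensemble (words 2) (shift_effect k (distance_witness r))) (tpow 2 s)
      = (k + t) / (2 * k) / 2"
    using t \<open>0 < k\<close> by (intro minerr_test_ensemble[OF finite_words]) (simp_all add: tr_tpow_2 tr_s)
  then show ?thesis
    by (simp add: t_def)
qed

lemma ensemble_distance_test:
  fixes r :: "'n::finite \<Rightarrow> 'n \<Rightarrow> complex"
  assumes r: "density UNIV r" and k: "3 * (real CARD('n) ^ 2 + 2) \<le> k"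
  shows "ensemble (words 2) 2 2 (\<lambda>_. 1/2) (test_ensemble (words 2) (shift_effect k (distance_witness r)))"
proof (rule ensemble_test_ensemble[OF finite_words], rule channel_shift_effect[OF finite_words])
  show "0 < k"
    using k by (smt (verit) zero_le_power2)
  show "hermitian_on (words 2) (distance_witness r)"
    by (rule hermitian_distance_witness[OF density_hermitian[OF r]])
  show "cmod (distance_witness r xs ys) \<le> 3" for xs ys
    using density_cmod_le_one[OF finite_class.finite_UNIV r] by (intro cmod_distance_witness_le) simp
  show "3 * (real (card (words 2 :: 'n list set)) + 2) \<le> k"
    using k by (simp add: card_words)
qed

lemma div_le_ratio_mult_div:
  fixes C K g D :: real
  assumes "0 < C" "0 < K" "0 \<le> g" "g \<le> D"
  shows "C / K \<le> C / (C + g) * ((C + D) / K)"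
proof -
  have "C = C / (C + g) * (C + g)"
    using assms(1,3) by simp
  also have "\<dots> \<le> C / (C + g) * (C + D)"
    using assms by (intro mult_left_mono) simp_all
  finally have "C / K \<le> C / (C + g) * (C + D) / K"
    using assms(2) by (intro divide_right_mono) simp_all
  then show ?thesis
    by simp
qed

theorem theorem11:
  fixes F :: "(complex^'n^'n) set" and \<rho> :: "complex^'n^'n"
  assumes "CARD('n) \<ge> 2"
    and "closed F"
    and "\<forall>\<sigma>\<in>F. density UNIV (mfun \<sigma>)"
    and "density UNIV (mfun \<rho>)"
    and "\<rho> \<notin> F"
  shows "\<exists>(n :: nat \<Rightarrow> nat) (N :: nat \<Rightarrow> nat) (p :: nat \<Rightarrow> nat \<Rightarrow> real)
           (\<Lambda> :: nat \<Rightarrow> nat \<Rightarrow> ('n list \<Rightarrow> 'n list \<Rightarrow> complex) \<Rightarrow> (nat \<Rightarrow> nat \<Rightarrow> complex)).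
           (\<forall>m\<in>{2..CARD('n)}. ensemble (words m) (n m) (N m) (p m) (\<Lambda> m)) \<and>
           (\<exists>c<1. \<forall>\<sigma>\<in>F. \<exists>m\<in>{2..CARD('n)}.
              minerr (n m) (N m) (p m) (\<Lambda> m) (tpow m (mfun \<sigma>)) > 0 \<and>
              minerr (n m) (N m) (p m) (\<Lambda> m) (tpow m (mfun \<rho>))
                \<le> c * minerr (n m) (N m) (p m) (\<Lambda> m) (tpow m (mfun \<sigma>)))"
proof -
  define k where "k = 4 * real CARD('n) ^ 2 + 6"
  define \<Lambda> :: "nat \<Rightarrow> nat \<Rightarrow> ('n list \<Rightarrow> 'n list \<Rightarrow> complex) \<Rightarrow> nat \<Rightarrow> nat \<Rightarrow> complex"
    where "\<Lambda> m = test_ensemble (words m)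
      (if m = 2 then shift_effect k (distance_witness (mfun \<rho>)) else id_mat)" for m
  define C where "C = k - hs_norm_sq (mfun \<rho>)"
  have ens: "ensemble (words m) 2 2 (\<lambda>_. 1/2) (\<Lambda> m)" for m
    unfolding \<Lambda>_def using ensemble_distance_test[OF assms(4), of k]
    by (auto simp: k_def intro!: ensemble_test_ensemble finite_words channel_measure_prepare_id_mat)
  have err: "minerr 2 2 (\<lambda>_. 1/2) (\<Lambda> 2) (tpow 2 (mfun \<sigma>)) = (C + (norm (\<sigma> - \<rho>))\<^sup>2) / (4 * k)"
    if "density UNIV (mfun \<sigma>)" for \<sigma>
  proof -
    have "(\<lambda>a b. mfun \<sigma> a b - mfun \<rho> a b) = mfun (\<sigma> - \<rho>)"
      by (simp add: fun_eq_iff mfun_def)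
    then show ?thesis
      using minerr_distance_test[OF assms(4) that, of k] by (simp add: \<Lambda>_def C_def k_def hs_norm_sq_mfun)
  qed
  have "0 < k" "0 < C"
    using hs_norm_sq_density_le[OF assms(4)] zero_le_power2[of "real CARD('n)"]
    unfolding C_def k_def by linarith+
  obtain e where "0 < e" and e: "\<forall>\<sigma>\<in>F. e \<le> dist \<rho> \<sigma>"
    using separate_point_closed[OF assms(2,5)] by blast
  have "0 < minerr 2 2 (\<lambda>_. 1/2) (\<Lambda> 2) (tpow 2 (mfun \<sigma>)) \<and>
      minerr 2 2 (\<lambda>_. 1/2) (\<Lambda> 2) (tpow 2 (mfun \<rho>))
        \<le> C / (C + e\<^sup>2) * minerr 2 2 (\<lambda>_. 1/2) (\<Lambda> 2) (tpow 2 (mfun \<sigma>))" if "\<sigma> \<in> F" for \<sigma>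
  proof -
    have "e \<le> norm (\<sigma> - \<rho>)"
      using e that by (metis dist_commute dist_norm)
    then have "e\<^sup>2 \<le> (norm (\<sigma> - \<rho>))\<^sup>2"
      using \<open>0 < e\<close> by (simp add: power_mono)
    then show ?thesis
      using err[OF assms(4)] err[of \<sigma>] assms(3) that \<open>0 < C\<close> \<open>0 < k\<close>
        div_le_ratio_mult_div[of C "4 * k" "e\<^sup>2" "(norm (\<sigma> - \<rho>))\<^sup>2"]
      by (simp add: add_pos_nonneg)
  qed
  moreover have "C / (C + e\<^sup>2) < 1"
    using \<open>0 < C\<close> \<open>0 < e\<close> by (simp add: add_pos_nonneg divide_less_eq)
  ultimately show ?thesis
    using ens assms(1)
    by (intro exI[of _ "\<lambda>_. 2"] exI[of _ "\<lambda>_. 2"] exI[of _ "\<lambda>_ _. 1/2"] exI[of _ \<Lambda>])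
      (auto intro!: exI[of _ "C / (C + e\<^sup>2)"] bexI[of _ 2])
qed

end
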